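(* Let $D$ be a nonempty convex subset of a topological vector space $X$ and let $K$ be a nonempty set. Let $R_1\subseteq D\times K$ and $R_2\subseteq D\times D$ be relations satisfying: (i) for each $y\in K$, the set $\{x\in D: (x,y)\in R_1\}$ is compactly closed; (ii) $R_2$ is KKM on $D\times D$; (iii) for each $y\in K$ there exists $z\in D$ such that for all $x\in D$, $(z,x)\in R_2$ implies $(x,y)\in R_1$; (iv) there exist a nonempty compact subset $M$ of $D$ and a finite subset $L$ of $K$ such that for each $x\in D\setminus M$ there exists $y\in L$ with $(x,y)\notin R_1$. Then there exists $\bar x\in M$ such that $(\bar x,y)\in R_1$ for all $y\in K$.
   Context: A subset $A$ of a topological space $X$ is compactly closed if for every compact subset $M$ of $X$ the set $A\cap M$ is closed in $M$. A relation $R'\subseteq D\times D$ is KKM on $D\times D$ if for every finite subset $\{x_1,\dots,x_n\}\subset D$ and every $x\in\operatorname{co}\{x_1,\dots,x_n\}$ there exists $j\in\{1,\dots,n\}$ with $(x_j,x)\in R'$. Here $\operatorname{co}$ denotes the convex hull. *)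

theory Defs
  imports "HOL-Analysis.Analysis"
begin

definition tvs :: "'a::{real_vector,topological_space} itself \<Rightarrow> bool" where
  "tvs _ \<longleftrightarrow>
     continuous_on UNIV (\<lambda>p::'a \<times> 'a. fst p + snd p) \<and>
     continuous_on UNIV (\<lambda>p::real \<times> 'a. fst p *\<^sub>R snd p)"

definition compactly_closed :: "'a::topological_space set \<Rightarrow> bool" where
  "compactly_closed A \<longleftrightarrow>
     (\<forall>M. compact M \<longrightarrow> closedin (top_of_set M) (A \<inter> M))"

definition KKM_rel :: "'a::real_vector set \<Rightarrow> ('a \<times> 'a) set \<Rightarrow> bool" where
  "KKM_rel D R \<longleftrightarrow>
     (\<forall>N. finite N \<and> N \<subseteq> D \<longrightarrow>
        (\<forall>x \<in> convex hull N. \<exists>z \<in> N. (z, x) \<in> R))"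

end

theory Submission
  imports Defs
begin

text \<open>The sections \<open>{x \<in> D. (x, y) \<in> R1}\<close> are compactly closed, so by compactness of \<open>M\<close> it
suffices that \<open>M\<close> meets every finite intersection of them; enlarging the finite index set by
\<open>L\<close>, condition (iv) puts every point of such an intersection into \<open>M\<close>. A finite intersection
is nonempty by the KKM theorem in a topological vector space: for points \<open>z\<^sub>y\<close> as in (iii),
condition (ii) says that every convex hull of \<open>z\<^sub>y\<close>'s is covered by the corresponding sections.
Pulling the sections back along the affine map of a simplex onto the hull of the \<open>z\<^sub>y\<close> reduces
this to the KKM lemma on a simplex, a consequence of Brouwer's fixed point theorem. As the
number of points is unbounded, the simplices live in \<open>nat \<Rightarrow> real\<close>, where Brouwer's theorem for
cubes is derived from Kuhn's combinatorial lemma via the Poincare-Miranda theorem.\<close>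

definition cube :: "nat \<Rightarrow> (nat \<Rightarrow> real) set" where
  "cube n = {x. (\<forall>i<n. 0 \<le> x i \<and> x i \<le> 1) \<and> (\<forall>i\<ge>n. x i = 0)}"

lemma compact_cube: "compact (cube n)"
proof -
  have "cube n = PiE UNIV (\<lambda>i. if i < n then {0..1} else {0})"
    unfolding cube_def by (auto simp: PiE_iff) (metis atLeastAtMost_iff singletonD leD)+
  moreover have "compactin (product_topology (\<lambda>i. euclidean) UNIV)
      (PiE UNIV (\<lambda>i. if i < n then {0..1::real} else {0}))"
    by (subst compactin_PiE) auto
  ultimately show ?thesis
    by (simp add: euclidean_product_topology)
qed

lemma closed_cube: "closed (cube n)"
  by (simp add: compact_cube compact_imp_closed)

lemma continuous_on_coordinate [continuous_intros]: "continuous_on S (\<lambda>x::nat \<Rightarrow> real. x i)"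
  by (rule continuous_on_subset[OF continuous_on_product_coordinates]) simp

lemma tendsto_coordinatewise_iff:
  fixes f :: "'x \<Rightarrow> nat \<Rightarrow> real"
  shows "(f \<longlongrightarrow> l) F \<longleftrightarrow> (\<forall>i. ((\<lambda>c. f c i) \<longlongrightarrow> l i) F)"
  using limitin_componentwise[of "\<lambda>i. euclidean" UNIV f l F]
  by (simp add: euclidean_product_topology)

lemma closed_contains_limit_of_approximants:
  fixes P :: "(nat \<Rightarrow> real) set" and c :: "nat \<Rightarrow> nat \<Rightarrow> real"
  assumes "closed P" and c: "c \<longlonglongrightarrow> l" and e: "e \<longlonglongrightarrow> 0"
    and approx: "\<And>k. \<exists>a\<in>P. \<forall>j. \<bar>a j - c k j\<bar> \<le> e k"
  shows "l \<in> P"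
proof -
  obtain a where a: "\<And>k. a k \<in> P" and ac: "\<And>k j. \<bar>a k j - c k j\<bar> \<le> e k"
    using approx by metis
  have "(\<lambda>k. a k j) \<longlonglongrightarrow> l j" for j
  proof -
    have "(\<lambda>k. a k j - c k j) \<longlonglongrightarrow> 0"
      by (rule Lim_null_comparison[OF _ e]) (simp add: ac)
    moreover have "(\<lambda>k. c k j) \<longlonglongrightarrow> l j"
      using c by (simp add: tendsto_coordinatewise_iff)
    ultimately show ?thesis
      using tendsto_add by fastforce
  qed
  then have "a \<longlonglongrightarrow> l"
    by (simp add: tendsto_coordinatewise_iff)
  then show ?thesis
    using closed_sequentially[OF \<open>closed P\<close>] a by blast
qed

lemma poincare_miranda_grid:
  fixes P Q :: "nat \<Rightarrow> (nat \<Rightarrow> real) set"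
  assumes p: "p > 0"
    and P0: "\<And>i x. i < n \<Longrightarrow> x \<in> cube n \<Longrightarrow> x i = 0 \<Longrightarrow> x \<in> P i"
    and Q1: "\<And>i x. i < n \<Longrightarrow> x \<in> cube n \<Longrightarrow> x i = 1 \<Longrightarrow> x \<in> Q i"
    and PQ: "\<And>i x. i < n \<Longrightarrow> x \<in> cube n \<Longrightarrow> x \<in> P i \<or> x \<in> Q i"
  shows "\<exists>c\<in>cube n. \<forall>i<n. (\<exists>a\<in>P i. \<forall>j. \<bar>a j - c j\<bar> \<le> 1 / real p)
                           \<and> (\<exists>b\<in>Q i. \<forall>j. \<bar>b j - c j\<bar> \<le> 1 / real p)"
proof -
  define grid where "grid y = (\<lambda>j. if j < n then real (y j) / real p else 0)" for y :: "nat \<Rightarrow> nat"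
  have grid_cube: "grid y \<in> cube n" if "\<forall>j<n. y j \<le> p" for y
    using that p by (auto simp: grid_def cube_def divide_le_eq_1)
  define label where "label y i =
      (if y i = 0 then 0 else if y i = p then 1 else if grid y \<in> P i then 0 else (1::nat))" for y i
  have label0: "grid y \<in> P i" if "\<forall>j<n. y j \<le> p" "i < n" "label y i = 0" for y i
    using that P0[OF \<open>i < n\<close> grid_cube[OF that(1)]]
    by (auto simp: label_def grid_def split: if_splits)
  have label1: "grid y \<in> Q i" if "\<forall>j<n. y j \<le> p" "i < n" "label y i = 1" for y i
    using that p Q1[OF \<open>i < n\<close> grid_cube[OF that(1)]] PQ[OF \<open>i < n\<close> grid_cube[OF that(1)]]
    by (auto simp: label_def grid_def split: if_splits)
  \<comment> \<open>Kuhn's lemma gives a grid cell on which every label changes; a vertex labelled 0 in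
    coordinate \<open>i\<close> lies in \<open>P i\<close>, one labelled 1 lies in \<open>Q i\<close>.\<close>
  obtain q where q: "\<forall>i<n. q i < p"
    and cell: "\<forall>i<n. \<exists>r s. (\<forall>j<n. q j \<le> r j \<and> r j \<le> q j + 1)
                        \<and> (\<forall>j<n. q j \<le> s j \<and> s j \<le> q j + 1) \<and> label r i \<noteq> label s i"
    by (rule kuhn_lemma[OF p, of n label]) (use p in \<open>auto simp: label_def\<close>)
  have near: "\<bar>grid y j - grid q j\<bar> \<le> 1 / real p" if "\<forall>j<n. q j \<le> y j \<and> y j \<le> q j + 1" for y j
  proof (cases "j < n")
    case True
    then have "\<bar>real (y j) - real (q j)\<bar> \<le> 1"
      using that by auto
    then have "\<bar>real (y j) - real (q j)\<bar> / real p \<le> 1 / real p"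
      by (simp add: divide_right_mono)
    then show ?thesis
      using True by (simp add: grid_def diff_divide_distrib[symmetric])
  qed (simp add: grid_def)
  show ?thesis
  proof (intro bexI[OF _ grid_cube] allI impI)
    fix i assume i: "i < n"
    obtain r s where r: "\<forall>j<n. q j \<le> r j \<and> r j \<le> q j + 1" and s: "\<forall>j<n. q j \<le> s j \<and> s j \<le> q j + 1"
      and rs: "label r i \<noteq> label s i"
      using cell i by blast
    have "\<forall>j<n. r j \<le> p" "\<forall>j<n. s j \<le> p"
      using r s q by (auto simp: Suc_le_eq[symmetric] intro: le_trans)
    moreover have "label r i \<le> 1" "label s i \<le> 1"
      by (auto simp: label_def)
    ultimately have "grid r \<in> P i \<and> grid s \<in> Q i \<or> grid s \<in> P i \<and> grid r \<in> Q i"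
      using rs label0 label1 i by (metis le_neq_trans less_one)
    then show "(\<exists>a\<in>P i. \<forall>j. \<bar>a j - grid q j\<bar> \<le> 1 / real p)
             \<and> (\<exists>b\<in>Q i. \<forall>j. \<bar>b j - grid q j\<bar> \<le> 1 / real p)"
      using near[OF r] near[OF s] by blast
  qed (use q in \<open>auto intro: less_imp_le\<close>)
qed

lemma poincare_miranda_sets:
  fixes P Q :: "nat \<Rightarrow> (nat \<Rightarrow> real) set"
  assumes "\<And>i. i < n \<Longrightarrow> closed (P i)" and "\<And>i. i < n \<Longrightarrow> closed (Q i)"
    and "\<And>i x. i < n \<Longrightarrow> x \<in> cube n \<Longrightarrow> x i = 0 \<Longrightarrow> x \<in> P i"
    and "\<And>i x. i < n \<Longrightarrow> x \<in> cube n \<Longrightarrow> x i = 1 \<Longrightarrow> x \<in> Q i"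
    and "\<And>i x. i < n \<Longrightarrow> x \<in> cube n \<Longrightarrow> x \<in> P i \<or> x \<in> Q i"
  shows "\<exists>x\<in>cube n. \<forall>i<n. x \<in> P i \<and> x \<in> Q i"
proof -
  have "\<exists>c\<in>cube n. \<forall>i<n. (\<exists>a\<in>P i. \<forall>j. \<bar>a j - c j\<bar> \<le> 1 / real (Suc k))
                              \<and> (\<exists>b\<in>Q i. \<forall>j. \<bar>b j - c j\<bar> \<le> 1 / real (Suc k))" for k
    by (rule poincare_miranda_grid) (use assms(3-5) in auto)
  then obtain c where c: "\<And>k. c k \<in> cube n"
    and approx: "\<And>k i. i < n \<Longrightarrow> (\<exists>a\<in>P i. \<forall>j. \<bar>a j - c k j\<bar> \<le> 1 / real (Suc k))
                                  \<and> (\<exists>b\<in>Q i. \<forall>j. \<bar>b j - c k j\<bar> \<le> 1 / real (Suc k))"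
    by metis
  obtain l \<sigma> where l: "l \<in> cube n" and \<sigma>: "strict_mono \<sigma>" and lim: "(c \<circ> \<sigma>) \<longlonglongrightarrow> l"
    using compact_imp_seq_compact[OF compact_cube] c unfolding seq_compact_def by metis
  have e: "(\<lambda>k. 1 / real (Suc (\<sigma> k))) \<longlonglongrightarrow> 0"
    using LIMSEQ_subseq_LIMSEQ[OF LIMSEQ_inverse_real_of_nat \<sigma>] by (simp add: o_def inverse_eq_divide)
  have "l \<in> P i" "l \<in> Q i" if "i < n" for i
    using closed_contains_limit_of_approximants[OF _ lim e] assms(1,2) approx that
    by (simp_all add: o_def)
  then show ?thesis
    using l by blast
qed

lemma brouwer_nat_cube:
  assumes cont: "continuous_on (cube n) f" and f: "f \<in> cube n \<rightarrow> cube n"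
  shows "\<exists>x\<in>cube n. f x = x"
proof -
  have cont_i: "continuous_on (cube n) (\<lambda>x. f x i)" for i
    by (rule continuous_on_product_then_coordinatewise[OF cont])
  have "\<exists>x\<in>cube n. \<forall>i<n. x \<in> {x\<in>cube n. x i \<le> f x i} \<and> x \<in> {x\<in>cube n. f x i \<le> x i}"
  proof (rule poincare_miranda_sets)
    show "closed {x \<in> cube n. x i \<le> f x i}" "closed {x \<in> cube n. f x i \<le> x i}" for i
      by (intro continuous_on_closed_Collect_le cont_i closed_cube continuous_intros)+
  qed (use f in \<open>auto simp: cube_def\<close>)
  then obtain x where x: "x \<in> cube n" and fix_i: "\<forall>i<n. x i \<le> f x i \<and> f x i \<le> x i"
    by auto
  have "f x i = x i" for i
  proof -
    have "f x \<in> cube n"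
      using f x by blast
    then show ?thesis
      using fix_i x by (cases "i < n") (auto simp: cube_def)
  qed
  then show ?thesis
    using x by auto
qed

definition corner_simplex :: "nat \<Rightarrow> (nat \<Rightarrow> real) set" where
  "corner_simplex n = {x\<in>cube n. (\<Sum>i<n. x i) \<le> 1}"

text \<open>Barycentric coordinates on the simplex with vertices \<open>0, e\<^sub>0, \<dots>, e\<^sub>n\<^sub>-\<^sub>1\<close>.\<close>
definition bary :: "nat \<Rightarrow> (nat \<Rightarrow> real) \<Rightarrow> nat \<Rightarrow> real" where
  "bary n x j = (if j = 0 then 1 - (\<Sum>i<n. x i) else x (j - 1))"

lemma sum_bary: "(\<Sum>j\<le>n. bary n x j) = 1"
  by (simp add: bary_def sum.atMost_shift)

lemma continuous_on_bary [continuous_intros]: "continuous_on S (\<lambda>x. bary n x j)"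
  by (cases "j = 0") (simp_all add: bary_def continuous_intros)

lemma corner_simplex_iff_bary:
  "x \<in> corner_simplex n \<longleftrightarrow> (\<forall>j\<le>n. 0 \<le> bary n x j) \<and> (\<forall>i\<ge>n. x i = 0)"
proof
  assume bary: "(\<forall>j\<le>n. 0 \<le> bary n x j) \<and> (\<forall>i\<ge>n. x i = 0)"
  have nonneg: "0 \<le> x i" if "i < n" for i
    using bary[THEN conjunct1, rule_format, of "Suc i"] that by (simp add: bary_def)
  moreover have "x i \<le> (\<Sum>i<n. x i)" if "i < n" for i
    using that nonneg by (intro member_le_sum) auto
  ultimately show "x \<in> corner_simplex n"
    using bary by (fastforce simp: corner_simplex_def cube_def bary_def)
qed (auto simp: corner_simplex_def cube_def bary_def)

lemma closed_corner_simplex: "closed (corner_simplex n)"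
  unfolding corner_simplex_def
  by (intro continuous_on_closed_Collect_le closed_cube continuous_intros)

lemma compact_corner_simplex: "compact (corner_simplex n)"
  using compact_Int_closed[OF compact_cube[of n] closed_corner_simplex[of n]]
  by (simp add: corner_simplex_def Int_absorb1 subset_iff)

lemma corner_simplex_retract_of_cube: "corner_simplex n retract_of cube n"
proof -
  define r where "r x = (\<lambda>i. x i / max 1 (\<Sum>k<n. x k))" for x :: "nat \<Rightarrow> real"
  have "r x \<in> corner_simplex n" if "x \<in> cube n" for x
  proof -
    have "(\<Sum>i<n. r x i) = (\<Sum>k<n. x k) / max 1 (\<Sum>k<n. x k)"
      by (simp add: r_def sum_divide_distrib)
    then have "(\<Sum>i<n. r x i) \<le> 1"
      by simp
    moreover have "0 \<le> bary n (r x) j" if "j \<le> n" for j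
      using \<open>x \<in> cube n\<close> that \<open>(\<Sum>i<n. r x i) \<le> 1\<close> by (auto simp: bary_def cube_def r_def)
    ultimately show ?thesis
      using \<open>x \<in> cube n\<close> by (auto simp: corner_simplex_iff_bary r_def cube_def)
  qed
  moreover have "r x = x" if "x \<in> corner_simplex n" for x
    using that by (auto simp: r_def corner_simplex_def max_def)
  moreover have "continuous_on (cube n) r"
    unfolding r_def by (intro continuous_on_coordinatewise_then_product continuous_intros) auto
  ultimately have "retraction (cube n) (corner_simplex n) r"
    by (auto simp: retraction_def corner_simplex_def)
  then show ?thesis
    by (auto simp: retract_of_def)
qed

lemma brouwer_corner_simplex:
  assumes "continuous_on (corner_simplex n) f" and "f \<in> corner_simplex n \<rightarrow> corner_simplex n"
  shows "\<exists>x\<in>corner_simplex n. f x = x"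
  using retract_fixpoint_property[OF corner_simplex_retract_of_cube brouwer_nat_cube assms]
  by metis

lemma bary_proportional_fixpoint:
  fixes w :: "nat \<Rightarrow> (nat \<Rightarrow> real) \<Rightarrow> real"
  assumes w_cont: "\<And>j. continuous_on (corner_simplex n) (w j)"
    and w_nonneg: "\<And>j x. x \<in> corner_simplex n \<Longrightarrow> 0 \<le> w j x"
    and S_pos: "\<And>x. x \<in> corner_simplex n \<Longrightarrow> 0 < (\<Sum>j\<le>n. w j x)"
  shows "\<exists>x\<in>corner_simplex n. \<forall>j\<le>n. bary n x j = w j x / (\<Sum>j\<le>n. w j x)"
proof -
  define S where "S x = (\<Sum>j\<le>n. w j x)" for x
  define f where "f x = (\<lambda>i. if i < n then w (Suc i) x / S x else 0)" for x
  have bary_f: "bary n (f x) j = w j x / S x" if x: "x \<in> corner_simplex n" and "j \<le> n" for x j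
  proof (cases "j = 0")
    case True
    have "S x = w 0 x + (\<Sum>i<n. w (Suc i) x)"
      by (simp add: S_def sum.atMost_shift)
    then show ?thesis
      using True S_pos[OF x] by (simp add: S_def bary_def f_def field_simps flip: sum_divide_distrib)
  qed (use that in \<open>simp add: bary_def f_def\<close>)
  have "f x \<in> corner_simplex n" if x: "x \<in> corner_simplex n" for x
    unfolding corner_simplex_iff_bary using bary_f[OF x] w_nonneg[OF x] S_pos[OF x]
    by (simp add: S_def f_def less_imp_le)
  then have "f \<in> corner_simplex n \<rightarrow> corner_simplex n"
    by blast
  moreover have "continuous_on (corner_simplex n) f"
  proof (rule continuous_on_coordinatewise_then_product)
    show "continuous_on (corner_simplex n) (\<lambda>x. f x i)" for i
      unfolding f_def S_def using S_pos
      by (cases "i < n") (force intro!: continuous_intros w_cont)+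
  qed
  ultimately obtain x where x: "x \<in> corner_simplex n" and "f x = x"
    using brouwer_corner_simplex by blast
  then have "bary n x j = w j x / S x" if "j \<le> n" for j
    using bary_f[OF x that] by simp
  then show ?thesis
    using x by (auto simp: S_def)
qed

lemma KKM_corner_simplex:
  fixes B :: "nat \<Rightarrow> (nat \<Rightarrow> real) set"
  assumes B_closed: "\<And>j. j \<le> n \<Longrightarrow> closed (B j)"
    and cover: "\<And>x. x \<in> corner_simplex n \<Longrightarrow> \<exists>j\<le>n. 0 < bary n x j \<and> x \<in> B j"
  shows "\<exists>x\<in>corner_simplex n. \<forall>j\<le>n. x \<in> B j"
proof (rule ccontr)
  assume "\<not> ?thesis"
  then have outside: "\<And>x. x \<in> corner_simplex n \<Longrightarrow> \<exists>j\<le>n. x \<notin> B j"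
    by blast
  \<comment> \<open>\<open>infdist x {} = 0\<close>, so empty sets need the extra summand\<close>
  define g where "g j x = infdist x (B j) + (if B j = {} then 1 else 0)" for j x
  have g_nonneg: "0 \<le> g j x" for j x
    by (simp add: g_def infdist_nonneg)
  have g_eq_0_iff: "g j x = 0 \<longleftrightarrow> x \<in> B j" if "j \<le> n" for j x
    using in_closed_iff_infdist_zero[OF B_closed[OF that]] infdist_nonneg[of x "B j"]
    by (auto simp: g_def)
  have "0 < (\<Sum>j\<le>n. g j x)" if x: "x \<in> corner_simplex n" for x
  proof -
    obtain j where j: "j \<le> n" "x \<notin> B j"
      using outside[OF x] by blast
    then have "0 < g j x"
      using g_eq_0_iff[OF j(1)] g_nonneg[of j x] j(2) by (simp add: order_less_le)
    also have "g j x \<le> (\<Sum>j\<le>n. g j x)"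
      using j(1) by (intro member_le_sum) (auto simp: g_nonneg)
    finally show ?thesis .
  qed
  moreover have "continuous_on (corner_simplex n) (g j)" for j
    unfolding g_def by (intro continuous_intros)
  ultimately obtain x where x: "x \<in> corner_simplex n"
    and bary_x: "\<forall>j\<le>n. bary n x j = g j x / (\<Sum>j\<le>n. g j x)"
    using bary_proportional_fixpoint[of n g] g_nonneg by blast
  obtain j where j: "j \<le> n" "0 < bary n x j" "x \<in> B j"
    using cover[OF x] by blast
  moreover have "g j x = 0"
    using g_eq_0_iff j by blast
  ultimately show False
    using bary_x by simp
qed

lemma continuous_on_tvs_add:
  fixes f g :: "'x::topological_space \<Rightarrow> 'a::{real_vector,topological_space}"
  assumes "tvs TYPE('a)" and "continuous_on S f" and "continuous_on S g"
  shows "continuous_on S (\<lambda>x. f x + g x)"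
proof -
  have "continuous_on UNIV (\<lambda>p::'a \<times> 'a. fst p + snd p)"
    using assms(1) by (simp add: tvs_def)
  then show ?thesis
    using continuous_on_compose2[OF _ continuous_on_Pair[OF assms(2,3)]] by fastforce
qed

lemma continuous_on_tvs_scaleR:
  fixes a :: "'x::topological_space \<Rightarrow> real" and v :: "'a::{real_vector,topological_space}"
  assumes "tvs TYPE('a)" and "continuous_on S a"
  shows "continuous_on S (\<lambda>x. a x *\<^sub>R v)"
proof -
  have "continuous_on UNIV (\<lambda>p::real \<times> 'a. fst p *\<^sub>R snd p)"
    using assms(1) by (simp add: tvs_def)
  then show ?thesis
    using continuous_on_compose2[OF _ continuous_on_Pair[OF assms(2) continuous_on_const]]
    by fastforce
qed

lemma continuous_on_tvs_sum:
  fixes h :: "'i \<Rightarrow> 'x::topological_space \<Rightarrow> 'a::{real_vector,topological_space}"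
  assumes "tvs TYPE('a)" and "finite I" and "\<And>i. i \<in> I \<Longrightarrow> continuous_on S (h i)"
  shows "continuous_on S (\<lambda>x. \<Sum>i\<in>I. h i x)"
  using assms(2,3)
proof (induction I rule: finite_induct)
  case (insert i I)
  then show ?case
    by (simp add: continuous_on_tvs_add[OF assms(1)])
qed (simp add: continuous_on_const)

lemma closedin_preimage_compactly_closed:
  assumes "compact S" and "continuous_on S f" and "compactly_closed G"
  shows "closedin (top_of_set S) (S \<inter> f -` G)"
proof -
  have "closedin (top_of_set (f ` S)) (G \<inter> f ` S)"
    using assms compact_continuous_image unfolding compactly_closed_def by blast
  then have "closedin (top_of_set S) (S \<inter> f -` (G \<inter> f ` S))"
    using continuous_closedin_preimage_gen[OF assms(2)] by blast
  moreover have "S \<inter> f -` (G \<inter> f ` S) = S \<inter> f -` G"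
    by blast
  ultimately show ?thesis
    by simp
qed

lemma bary_combination_in_convex_hull:
  fixes v :: "nat \<Rightarrow> 'a::real_vector"
  assumes "x \<in> corner_simplex n"
  shows "(\<Sum>j\<le>n. bary n x j *\<^sub>R v j) \<in> convex hull (v ` {j. j \<le> n \<and> 0 < bary n x j})"
proof -
  define T where "T = {j. j \<le> n \<and> 0 < bary n x j}"
  have "0 \<le> bary n x j" if "j \<le> n" for j
    using assms that by (simp add: corner_simplex_iff_bary)
  then have zero: "bary n x j = 0" if "j \<in> {..n} - T" for j
    using that by (force simp: T_def)
  have T: "T \<subseteq> {..n}"
    by (auto simp: T_def)
  have "(\<Sum>j\<in>T. bary n x j) = (\<Sum>j\<le>n. bary n x j)"
    by (rule sum.mono_neutral_left) (use T zero in auto)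
  also have "\<dots> = 1"
    by (rule sum_bary)
  finally have weights: "(\<Sum>j\<in>T. bary n x j) = 1" .
  have "(\<Sum>j\<in>T. bary n x j *\<^sub>R v j) \<in> convex hull (v ` T)"
    by (rule convex_sum[OF _ convex_convex_hull weights]) (auto simp: T_def intro: hull_inc)
  moreover have "(\<Sum>j\<le>n. bary n x j *\<^sub>R v j) = (\<Sum>j\<in>T. bary n x j *\<^sub>R v j)"
    by (rule sum.mono_neutral_right) (use T zero in auto)
  ultimately show ?thesis
    by (simp add: T_def)
qed

theorem KKM_tvs:
  fixes z :: "'i \<Rightarrow> 'a::{real_vector,topological_space}" and G :: "'i \<Rightarrow> 'a set"
  assumes tvs: "tvs TYPE('a)" and "finite I" and "I \<noteq> {}"
    and G_closed: "\<And>i. i \<in> I \<Longrightarrow> compactly_closed (G i)"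
    and cover: "\<And>T. T \<subseteq> I \<Longrightarrow> convex hull (z ` T) \<subseteq> (\<Union>i\<in>T. G i)"
  shows "(\<Inter>i\<in>I. G i) \<noteq> {}"
proof -
  obtain n where "card I = Suc n"
    using assms(2,3) by (metis card_0_eq not0_implies_Suc)
  then obtain e where e: "bij_betw e {..n} I"
    using finite_same_card_bij[OF finite_atMost assms(2)] by auto
  define \<phi> where "\<phi> x = (\<Sum>j\<le>n. bary n x j *\<^sub>R z (e j))" for x
  have \<phi>_cont: "continuous_on (corner_simplex n) \<phi>"
    unfolding \<phi>_def
    by (intro continuous_on_tvs_sum[OF tvs] continuous_on_tvs_scaleR[OF tvs] continuous_on_bary) simp
  have "closed (corner_simplex n \<inter> \<phi> -` G (e j))" if "j \<le> n" for j
  proof -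
    have "e j \<in> I"
      using e that bij_betwE by blast
    then show ?thesis
      using closedin_preimage_compactly_closed[OF compact_corner_simplex \<phi>_cont G_closed]
        closedin_closed_trans closed_corner_simplex by blast
  qed
  moreover have "\<exists>j\<le>n. 0 < bary n x j \<and> x \<in> corner_simplex n \<inter> \<phi> -` G (e j)"
    if x: "x \<in> corner_simplex n" for x
  proof -
    define T where "T = {j. j \<le> n \<and> 0 < bary n x j}"
    have "\<phi> x \<in> convex hull (z ` e ` T)"
      using bary_combination_in_convex_hull[OF x, of "z \<circ> e"]
      by (simp add: \<phi>_def T_def image_comp)
    moreover have "e ` T \<subseteq> I"
      using e by (auto simp: T_def bij_betw_def)
    ultimately obtain j where "j \<in> T" "\<phi> x \<in> G (e j)"
      using cover by blast
    then show ?thesis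
      using x by (auto simp: T_def)
  qed
  ultimately obtain x where "\<forall>j\<le>n. \<phi> x \<in> G (e j)"
    using KKM_corner_simplex[of n "\<lambda>j. corner_simplex n \<inter> \<phi> -` G (e j)"] by blast
  then have "\<phi> x \<in> (\<Inter>i\<in>I. G i)"
    using e by (auto simp: bij_betw_def)
  then show ?thesis
    by blast
qed

lemma KKM_rel_convex_hull_subset_sections:
  assumes "KKM_rel D R2" and "R2 \<subseteq> D \<times> D" and "finite T" and "z ` T \<subseteq> D"
    and "\<And>y x. y \<in> T \<Longrightarrow> x \<in> D \<Longrightarrow> (z y, x) \<in> R2 \<Longrightarrow> (x, y) \<in> R1"
  shows "convex hull (z ` T) \<subseteq> (\<Union>y\<in>T. {x \<in> D. (x, y) \<in> R1})"
proof
  fix x assume "x \<in> convex hull (z ` T)"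
  then obtain y where "y \<in> T" and zx: "(z y, x) \<in> R2"
    using assms(1,3,4) unfolding KKM_rel_def by blast
  moreover have "x \<in> D"
    using zx assms(2) by blast
  ultimately show "x \<in> (\<Union>y\<in>T. {x \<in> D. (x, y) \<in> R1})"
    using assms(5) by blast
qed

lemma KKM_rel_sections_Inter_nonempty:
  fixes D :: "'a::{real_vector,topological_space} set"
  assumes tvs: "tvs TYPE('a)" and kkm: "KKM_rel D R2" and "R2 \<subseteq> D \<times> D"
    and "finite F" and "F \<noteq> {}"
    and cc: "\<And>y. y \<in> F \<Longrightarrow> compactly_closed {x \<in> D. (x, y) \<in> R1}"
    and "\<And>y. y \<in> F \<Longrightarrow> \<exists>z\<in>D. \<forall>x\<in>D. (z, x) \<in> R2 \<longrightarrow> (x, y) \<in> R1"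
  shows "\<exists>x\<in>D. \<forall>y\<in>F. (x, y) \<in> R1"
proof -
  obtain z where z: "\<And>y. y \<in> F \<Longrightarrow> z y \<in> D \<and> (\<forall>x\<in>D. (z y, x) \<in> R2 \<longrightarrow> (x, y) \<in> R1)"
    using assms(7) by metis
  have cover: "convex hull (z ` T) \<subseteq> (\<Union>y\<in>T. {x \<in> D. (x, y) \<in> R1})" if T: "T \<subseteq> F" for T
  proof (rule KKM_rel_convex_hull_subset_sections[OF kkm \<open>R2 \<subseteq> D \<times> D\<close>])
    show "finite T"
      using T \<open>finite F\<close> by (rule finite_subset)
    show "z ` T \<subseteq> D"
      using T z by blast
    show "(x, y) \<in> R1" if "y \<in> T" "x \<in> D" "(z y, x) \<in> R2" for y x
      using that T z by blast
  qed
  have "(\<Inter>y\<in>F. {x \<in> D. (x, y) \<in> R1}) \<noteq> {}"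
    using KKM_tvs[where G = "\<lambda>y. {x \<in> D. (x, y) \<in> R1}", OF tvs \<open>finite F\<close> \<open>F \<noteq> {}\<close> cc cover]
    by blast
  then show ?thesis
    using \<open>F \<noteq> {}\<close> by blast
qed

lemma compactly_closed_fip:
  assumes "compact M" and G_closed: "\<And>y. y \<in> K \<Longrightarrow> compactly_closed (G y)"
    and fip: "\<And>F. finite F \<Longrightarrow> F \<subseteq> K \<Longrightarrow> M \<inter> (\<Inter>y\<in>F. G y) \<noteq> {}"
  shows "M \<inter> (\<Inter>y\<in>K. G y) \<noteq> {}"
proof -
  have "compactin (top_of_set M) M"
    using \<open>compact M\<close> by (simp add: compactin_subtopology)
  moreover have "\<forall>C\<in>(\<lambda>y. G y \<inter> M) ` K. closedin (top_of_set M) C"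
    using G_closed \<open>compact M\<close> unfolding compactly_closed_def by blast
  moreover have "M \<inter> \<Inter>\<F> \<noteq> {}" if \<F>: "finite \<F>" "\<F> \<subseteq> (\<lambda>y. G y \<inter> M) ` K" for \<F>
  proof -
    obtain F where "F \<subseteq> K" "finite F" "\<F> = (\<lambda>y. G y \<inter> M) ` F"
      using \<F> by (meson finite_subset_image)
    then show ?thesis
      using fip by auto
  qed
  ultimately have "M \<inter> \<Inter>((\<lambda>y. G y \<inter> M) ` K) \<noteq> {}"
    unfolding compactin_fip by blast
  then show ?thesis
    by blast
qed

theorem corollary3p2:
  fixes D :: "'a::{real_vector,topological_space} set"
    and K :: "'b set"
    and R1 :: "('a \<times> 'b) set"
    and R2 :: "('a \<times> 'a) set"
    and M :: "'a set"
    and L :: "'b set"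
  assumes "tvs TYPE('a)"
    and "D \<noteq> {}" and "convex D" and "K \<noteq> {}"
    and "R1 \<subseteq> D \<times> K" and "R2 \<subseteq> D \<times> D"
    and "\<forall>y\<in>K. compactly_closed {x \<in> D. (x, y) \<in> R1}"
    and "KKM_rel D R2"
    and "\<forall>y\<in>K. \<exists>z\<in>D. \<forall>x\<in>D. (z, x) \<in> R2 \<longrightarrow> (x, y) \<in> R1"
    and "M \<noteq> {}" and "compact M" and "M \<subseteq> D"
    and "finite L" and "L \<subseteq> K"
    and "\<forall>x \<in> D - M. \<exists>y\<in>L. (x, y) \<notin> R1"
  shows "\<exists>xb\<in>M. \<forall>y\<in>K. (xb, y) \<in> R1"
proof -
  obtain y\<^sub>0 where "y\<^sub>0 \<in> K"
    using assms(4) by blast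
  have "M \<inter> (\<Inter>y\<in>F. {x \<in> D. (x, y) \<in> R1}) \<noteq> {}" if F: "finite F" "F \<subseteq> K" for F
  proof -
    have F': "finite (insert y\<^sub>0 (F \<union> L))" "insert y\<^sub>0 (F \<union> L) \<subseteq> K"
      using F assms(13,14) \<open>y\<^sub>0 \<in> K\<close> by auto
    have "\<exists>x\<in>D. \<forall>y\<in>insert y\<^sub>0 (F \<union> L). (x, y) \<in> R1"
      by (rule KKM_rel_sections_Inter_nonempty[OF assms(1,8,6) F'(1)]) (use F'(2) assms(7,9) in auto)
    then obtain x where x: "x \<in> D" "\<forall>y\<in>insert y\<^sub>0 (F \<union> L). (x, y) \<in> R1"
      by blast
    then have "x \<in> M"
      using assms(15) by blast
    then show ?thesis
      using x by blast
  qed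
  then have "M \<inter> (\<Inter>y\<in>K. {x \<in> D. (x, y) \<in> R1}) \<noteq> {}"
    using compactly_closed_fip[OF assms(11), of K "\<lambda>y. {x \<in> D. (x, y) \<in> R1}"] assms(7)
    by blast
  then show ?thesis
    by blast
qed

end
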